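(* For $n\in\mathbb{N}$ let $(U_k^{(n)})_{k\in\mathbb{N}}$ be independent random variables uniformly distributed on $\{1,\dots,n\}$, let $Y_n(m):=\log{\rm lcm}(U_1^{(n)},\dots,U_m^{(n)})$ for $m\ge1$ and $Y_n(0)=0$, and for $t\ge0$ put $$Z_n(t):=\sum_{p\le n,\ p\ \text{prime}}\log p\cdot\mathbbm{1}_{\{\max_{1\le k\le\lfloor m_nt\rfloor}\lambda_p(U_k^{(n)})\ge1\}}$$ (the maximum over an empty set being $0$). Assume $m_n\to\infty$ and $m_n=o(n)$ as $n\to\infty$. Then for every $T>0$, $$\mathbb{E}\Bigl(\sup_{t\in[0,T]}\bigl(Y_n(\lfloor m_nt\rfloor)-Z_n(t)\bigr)\Bigr)=O(m_n^{1/2}),\qquad n\to\infty.$$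
   Context: For a prime $p$ and $k\in\mathbb{N}$, $\lambda_p(k)$ is the exponent of $p$ in the prime factorization of $k$. ${\rm lcm}$ denotes least common multiple. *)

theory Defs
  imports "HOL-Probability.Probability" "HOL-Library.Landau_Symbols"
begin

text \<open>lambda_p(k): exponent of p in k, i.e. multiplicity p k.
  Y_n(j) = log lcm(U_1,...,U_j), with Y_n(0) = log (Lcm {}) = log 1 = 0.\<close>
definition lcmY :: "(nat \<Rightarrow> 'a \<Rightarrow> nat) \<Rightarrow> nat \<Rightarrow> 'a \<Rightarrow> real" where
  "lcmY U j \<omega> = ln (real (Lcm ((\<lambda>k. U k \<omega>) ` {1..j})))"

text \<open>Z_n(t) with N = floor(m_n t) steps; the max over an empty set is 0.\<close>
definition primeZ :: "nat \<Rightarrow> (nat \<Rightarrow> 'a \<Rightarrow> nat) \<Rightarrow> nat \<Rightarrow> 'a \<Rightarrow> real" where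
  "primeZ n U N \<omega> = (\<Sum>p\<in>{p. prime p \<and> p \<le> n}.
      ln (real p) * (if Max (insert 0 ((\<lambda>k. multiplicity p (U k \<omega>)) ` {1..N})) \<ge> 1 then 1 else 0))"

end

theory Submission
  imports Defs
begin

(* For a set A of numbers in {1..n}, ln (Lcm A) minus the sum of ln p over the primes dividing
   some element of A is sum_p ln p * (max_(a in A) lambda_p(a) - 1)_+, i.e. ln p counted once for
   every j >= 2 such that p^j divides some element of A. This grows with A, so the supremum over t
   is at most its value for N = floor(m_n T). By the union bound, p^j divides one of U_1, ..., U_N
   with probability at most min 1 (N / p^j). The terms j = 2 contribute
   sum_p ln p * min 1 (N / p^2) = O(sqrt N) by Chebyshev's bound theta(x) <= x ln 4 and partial
   summation; for j >= 3, min 1 y <= sqrt y leaves sqrt N * sum_p ln p / p^(3/2) = O(sqrt N). *)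

subsection \<open>Chebyshev's bound and partial summation\<close>

lemma binomial_odd_middle_le_4_pow: "(2*m+1) choose (m+1) \<le> (4::nat)^m"
proof -
  have symm: "(2*m+1) choose m = (2*m+1) choose (m+1)"
    using binomial_symmetric[of m "2*m+1"] by simp
  have "(\<Sum>k\<in>{m,m+1}. (2*m+1) choose k) \<le> (\<Sum>k\<le>2*m+1. (2*m+1) choose k)"
    by (rule sum_mono2) auto
  also have "\<dots> = 2^(2*m+1)" by (rule choose_row_sum)
  finally have "2 * ((2*m+1) choose (m+1)) \<le> 2 * 4^m"
    using symm by (simp add: power_mult power_add)
  then show ?thesis by simp
qed

lemma prod_primes_middle_dvd_binomial:
  "(\<Prod>p\<in>{p. prime p \<and> m+1 < p \<and> p \<le> 2*m+1}. p) dvd (2*m+1) choose (m+1)"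
proof -
  let ?Q = "(\<Prod>p\<in>{p. prime p \<and> m+1 < p \<and> p \<le> 2*m+1}. p)"
  have "?Q dvd \<Prod>{m+1+1..2*m+1}"
    by (rule prod_dvd_prod_subset) auto
  also have "\<Prod>{m+1+1..2*m+1} = fact (2*m+1) div fact (m+1)"
    by (rule fact_div_fact[symmetric]) simp
  also have "fact (2*m+1) = fact (m+1) * (fact m * ((2*m+1) choose (m+1)))"
    using binomial_fact_lemma[of "m+1" "2*m+1"] by (simp add: mult_ac)
  finally have "?Q dvd fact m * ((2*m+1) choose (m+1))" by simp
  moreover have "coprime ?Q (fact m)"
  proof (rule prod_coprime_left)
    fix p assume "p \<in> {p. prime p \<and> m+1 < p \<and> p \<le> 2*m+1}"
    then have "prime p" "\<not> p dvd fact m" using prime_dvd_fact_iff[of p m] by auto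
    then show "coprime p (fact m)" using prime_imp_coprime by blast
  qed
  ultimately show ?thesis by (simp add: coprime_dvd_mult_right_iff)
qed

lemma prod_primes_middle_le_4_pow:
  "(\<Prod>p\<in>{p. prime p \<and> m+1 < p \<and> p \<le> 2*m+1}. p) \<le> (4::nat)^m"
proof -
  have "(\<Prod>p\<in>{p. prime p \<and> m+1 < p \<and> p \<le> 2*m+1}. p) \<le> (2*m+1) choose (m+1)"
    by (rule dvd_imp_le[OF prod_primes_middle_dvd_binomial]) (simp add: zero_less_binomial)
  then show ?thesis by (rule order_trans[OF _ binomial_odd_middle_le_4_pow])
qed

lemma prod_primes_le_4_pow: "(\<Prod>p\<in>{p. prime p \<and> p \<le> n}. p) \<le> (4::nat)^n"
proof (induction n rule: less_induct)
  case (less n)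
  consider "n \<le> 1" | "n = 2" | "2 < n" "even n" | m where "1 \<le> m" "n = 2*m+1"
  proof -
    have "1 \<le> n div 2" if "2 < n" using that by simp
    then show ?thesis using that by (cases "n \<le> 1"; cases "n = 2"; cases "even n") (auto elim!: oddE)
  qed
  then show ?case
  proof cases
    case 1
    then have no_primes: "{p. prime p \<and> p \<le> n} = {}" by (auto dest: prime_ge_2_nat)
    show ?thesis unfolding no_primes by simp
  next
    case 2
    have "{p. prime p \<and> p \<le> 2} = {2::nat}" using prime_ge_2_nat by (auto intro: antisym)
    then show ?thesis using 2 by simp
  next
    case 3
    then have "{p. prime p \<and> p \<le> n} = {p. prime p \<and> p \<le> n - 1}"
      using prime_odd_nat by (auto simp: le_less)
    then have "(\<Prod>p\<in>{p. prime p \<and> p \<le> n}. p) \<le> 4^(n-1)" using less[of "n-1"] 3 by simp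
    also have "\<dots> \<le> 4^n" by (rule power_increasing) auto
    finally show ?thesis .
  next
    case (4 m)
    have split: "{p. prime p \<and> p \<le> n} =
        {p. prime p \<and> p \<le> m+1} \<union> {p. prime p \<and> m+1 < p \<and> p \<le> 2*m+1}"
      using 4 by auto
    have "(\<Prod>p\<in>{p. prime p \<and> p \<le> n}. p) =
        (\<Prod>p\<in>{p. prime p \<and> p \<le> m+1}. p) * (\<Prod>p\<in>{p. prime p \<and> m+1 < p \<and> p \<le> 2*m+1}. p)"
      unfolding split by (rule prod.union_disjoint) auto
    also have "\<dots> \<le> 4^(m+1) * 4^m"
      using less[of "m+1"] 4 prod_primes_middle_le_4_pow by (intro mult_le_mono) auto
    also have "\<dots> = 4^n" using 4 by (simp flip: power_add)
    finally show ?thesis .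
  qed
qed

lemma sum_ln_primes_le: "(\<Sum>p\<in>{p. prime p \<and> p \<le> n}. ln (real p)) \<le> real n * ln 4"
proof -
  have "(\<Sum>p\<in>{p. prime p \<and> p \<le> n}. ln (real p)) = ln (real (\<Prod>p\<in>{p. prime p \<and> p \<le> n}. p))"
    by (subst ln_prod[symmetric]) (auto simp: prime_gt_0_nat)
  also have "\<dots> \<le> ln (real ((4::nat)^n))"
    using prod_primes_le_4_pow[of n]
    by (subst ln_le_cancel_iff)
      (auto intro!: prod_pos simp: prime_gt_0_nat simp del: of_nat_power of_nat_prod)
  also have "\<dots> = real n * ln 4" by (simp add: ln_realpow)
  finally show ?thesis .
qed

lemma sum_mult_antimono_le:
  fixes a g :: "nat \<Rightarrow> real"
  assumes "\<And>x. x \<le> n \<Longrightarrow> (\<Sum>d=1..x. a d) \<le> C * real x"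
    and "\<And>d. d \<in> {1..n} \<Longrightarrow> 0 \<le> g d"
    and "\<And>d e. 1 \<le> d \<Longrightarrow> d \<le> e \<Longrightarrow> e \<le> n \<Longrightarrow> g e \<le> g d"
  shows "(\<Sum>d=1..n. a d * g d) \<le> C * (\<Sum>d=1..n. g d)"
  using assms
proof (induction n arbitrary: g)
  case 0
  then show ?case by simp
next
  case (Suc n)
  \<comment> \<open>Subtracting the last value \<open>g (Suc n)\<close> keeps \<open>g\<close> nonnegative and antitone.\<close>
  define c where "c = g (Suc n)"
  define h where "h d = g d - c" for d
  have "0 \<le> c" unfolding c_def using Suc.prems(2)[of "Suc n"] by simp
  have IH: "(\<Sum>d=1..n. a d * h d) \<le> C * (\<Sum>d=1..n. h d)"
  proof (rule Suc.IH)
    show "(\<Sum>d=1..x. a d) \<le> C * real x" if "x \<le> n" for x using Suc.prems(1) that by simp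
    show "0 \<le> h d" if "d \<in> {1..n}" for d
      using Suc.prems(3)[of d "Suc n"] that unfolding h_def c_def by simp
    show "h e \<le> h d" if "1 \<le> d" "d \<le> e" "e \<le> n" for d e
      using Suc.prems(3)[of d e] that unfolding h_def by simp
  qed
  have "(\<Sum>d=1..Suc n. a d * g d) = (\<Sum>d=1..n. a d * h d) + c * (\<Sum>d=1..Suc n. a d)"
    unfolding h_def by (simp add: sum_distrib_left algebra_simps sum.distrib sum_subtractf c_def)
  also have "\<dots> \<le> C * (\<Sum>d=1..n. h d) + c * (C * real (Suc n))"
    using IH Suc.prems(1)[of "Suc n"] \<open>0 \<le> c\<close> by (intro add_mono mult_left_mono) auto
  also have "\<dots> = C * (\<Sum>d=1..Suc n. g d)"
    unfolding h_def by (simp add: sum_subtractf algebra_simps c_def)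
  finally show ?case .
qed

lemma sum_ln_primes_mult_antimono_le:
  fixes g :: "nat \<Rightarrow> real"
  assumes "\<And>d. d \<in> {1..n} \<Longrightarrow> 0 \<le> g d"
    and "\<And>d e. 1 \<le> d \<Longrightarrow> d \<le> e \<Longrightarrow> e \<le> n \<Longrightarrow> g e \<le> g d"
  shows "(\<Sum>p\<in>{p. prime p \<and> p \<le> n}. ln (real p) * g p) \<le> ln 4 * (\<Sum>d=1..n. g d)"
proof -
  define a where "a d = of_bool (prime d) * ln (real d)" for d
  have primes_sum: "(\<Sum>d=1..x. a d * f d) = (\<Sum>p\<in>{p. prime p \<and> p \<le> x}. ln (real p) * f p)"
    for x :: nat and f :: "nat \<Rightarrow> real"
  proof -
    have "{1..x} \<inter> {d. prime d} = {p. prime p \<and> p \<le> x}" using prime_ge_1_nat by auto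
    then show ?thesis unfolding a_def by (simp add: mult.assoc)
  qed
  have "(\<Sum>d=1..n. a d * g d) \<le> ln 4 * (\<Sum>d=1..n. g d)"
  proof (rule sum_mult_antimono_le)
    show "(\<Sum>d=1..x. a d) \<le> ln 4 * real x" for x
      using primes_sum[where x=x and f="\<lambda>_. 1"] sum_ln_primes_le[of x] by (simp add: mult.commute)
  qed (use assms in auto)
  then show ?thesis using primes_sum[where x=n and f=g] by simp
qed

lemma sum_inverse_consecutive_products:
  assumes "1 \<le> s" "s \<le> n"
  shows "(\<Sum>d\<in>{s<..n}. 1 / (real d * (real d - 1))) = 1 / real s - 1 / real n"
  using assms(2)
proof (induction n rule: dec_induct)
  case base
  then show ?case by simp
next
  case (step n)
  have "0 < real n" using step(1) assms(1) by simp
  have "{s<..Suc n} = insert (Suc n) {s<..n}" using step(1) by auto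
  then have "(\<Sum>d\<in>{s<..Suc n}. 1 / (real d * (real d - 1))) =
      1 / (real (Suc n) * (real (Suc n) - 1)) + (\<Sum>d\<in>{s<..n}. 1 / (real d * (real d - 1)))"
    by simp
  also have "1 / (real (Suc n) * (real (Suc n) - 1)) = 1 / real n - 1 / real (Suc n)"
    using \<open>0 < real n\<close> by (simp add: field_simps)
  finally show ?case using step(3) by simp
qed

lemma sum_min_one_div_square_le:
  fixes N :: real
  assumes "0 \<le> N"
  shows "(\<Sum>d=1..n. min 1 (N / real d ^ 2)) \<le> 2 * sqrt N + 1"
proof -
  define s where "s = nat \<lfloor>sqrt N\<rfloor> + 1"
  have "1 \<le> s" unfolding s_def by simp
  have "real (nat \<lfloor>sqrt N\<rfloor>) = of_int \<lfloor>sqrt N\<rfloor>" using assms by simp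
  then have s_bounds: "sqrt N < real s" "real s \<le> sqrt N + 1"
    unfolding s_def by linarith+
  have "N / real s \<le> sqrt N"
  proof (cases "N = 0")
    case False
    then have "0 < sqrt N" using assms by simp
    have "N / real s \<le> N / sqrt N"
      using \<open>0 < sqrt N\<close> \<open>1 \<le> s\<close> s_bounds assms by (intro divide_left_mono) (auto intro!: mult_pos_pos)
    also have "\<dots> = sqrt N" using assms by (metis real_div_sqrt)
    finally show ?thesis .
  qed simp
  show ?thesis
  proof (cases "n \<le> s")
    case True
    have "(\<Sum>d=1..n. min 1 (N / real d ^ 2)) \<le> (\<Sum>d=1..n. 1)" by (intro sum_mono) simp
    also have "\<dots> \<le> real s" using True by simp
    finally show ?thesis using s_bounds(2) real_sqrt_ge_zero[OF assms] by linarith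
  next
    case False
    have split: "{1..n} = {1..s} \<union> {s<..n}" using False by auto
    have "(\<Sum>d=1..n. min 1 (N / real d ^ 2)) =
        (\<Sum>d=1..s. min 1 (N / real d ^ 2)) + (\<Sum>d\<in>{s<..n}. min 1 (N / real d ^ 2))"
      unfolding split by (rule sum.union_disjoint) auto
    also have "\<dots> \<le> (\<Sum>d=1..s. 1) + (\<Sum>d\<in>{s<..n}. N * (1 / (real d * (real d - 1))))"
    proof (intro add_mono sum_mono)
      fix d assume "d \<in> {s<..n}"
      then have "1 < real d" using \<open>1 \<le> s\<close> by simp
      then have "N / real d ^ 2 \<le> N / (real d * (real d - 1))"
        using assms by (intro divide_left_mono) (auto simp: power2_eq_square)
      then show "min 1 (N / real d ^ 2) \<le> N * (1 / (real d * (real d - 1)))" by simp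
    qed simp
    also have "\<dots> = real s + N * (1 / real s - 1 / real n)"
      using sum_inverse_consecutive_products[of s n] \<open>1 \<le> s\<close> False
      by (simp only: sum_distrib_left[symmetric]) simp
    also have "\<dots> \<le> real s + N / real s"
      using assms by (simp add: algebra_simps)
    finally show ?thesis using s_bounds \<open>N / real s \<le> sqrt N\<close> by linarith
  qed
qed

lemma inverse_three_halves_le_diff:
  assumes "1 \<le> n"
  shows "1 / (real (Suc n) * sqrt (real (Suc n))) \<le> 2 / sqrt (real n) - 2 / sqrt (real (Suc n))"
proof -
  define a where "a = sqrt (real n)"
  define b where "b = sqrt (real (Suc n))"
  have "0 < a" "a < b" unfolding a_def b_def using assms by simp_all
  have "b * b = a * a + 1" unfolding a_def b_def by simp
  then have "b - a = 1 / (a + b)" using \<open>0 < a\<close> \<open>a < b\<close> by (simp add: field_simps)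
  have "2 / a - 2 / b = 2 * (b - a) / (a * b)" using \<open>0 < a\<close> \<open>a < b\<close> by (simp add: field_simps)
  also have "\<dots> = 2 / (a * b * (a + b))"
    unfolding \<open>b - a = 1 / (a + b)\<close> using \<open>0 < a\<close> \<open>a < b\<close> by (simp add: field_simps)
  finally have "2 / a - 2 / b = 2 / (a * b * (a + b))" .
  moreover have "a * b * (a + b) \<le> b * b * (2 * b)"
    using \<open>0 < a\<close> \<open>a < b\<close> by (intro mult_mono) auto
  then have "2 / (b * b * (2 * b)) \<le> 2 / (a * b * (a + b))"
    using \<open>0 < a\<close> \<open>a < b\<close> by (intro divide_left_mono) auto
  moreover have "real (Suc n) * sqrt (real (Suc n)) = b * b * b" unfolding b_def by simp
  ultimately show ?thesis unfolding a_def b_def by simp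
qed

lemma sum_inverse_three_halves_le: "(\<Sum>d=1..n. 1 / (real d * sqrt (real d))) \<le> 3"
proof (cases "n = 0")
  case False
  have telescoped: "(\<Sum>d=1..n. 1 / (real d * sqrt (real d))) \<le> 3 - 2 / sqrt (real n)"
    if "1 \<le> n" for n
    using that
  proof (induction n rule: dec_induct)
    case base
    then show ?case by simp
  next
    case (step n)
    then show ?case using inverse_three_halves_le_diff[of n] by simp
  qed
  have "0 \<le> 2 / sqrt (real n)" by simp
  with telescoped[of n] False show ?thesis by linarith
qed simp

lemma min_one_le_sqrt:
  fixes x :: real
  assumes "0 \<le> x"
  shows "min 1 x \<le> sqrt x"
proof (cases "x \<le> 1")
  case True
  then have "x * x \<le> x" using assms by (simp add: mult_left_le)
  then have "x \<le> sqrt x" using assms by (simp add: real_le_rsqrt power2_eq_square)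
  then show ?thesis by simp
qed simp

lemma sum_power_atLeastAtMost_le:
  fixes r :: real
  assumes "0 \<le> r" "r < 1"
  shows "(\<Sum>j=k..K. r ^ j) \<le> r ^ k / (1 - r)"
proof (cases "K < k")
  case False
  then have "(\<Sum>j=k..K. r ^ j) = (r ^ k - r ^ Suc K) / (1 - r)"
    using assms by (subst sum_gp) auto
  also have "\<dots> \<le> r ^ k / (1 - r)"
    using assms by (intro divide_right_mono) auto
  finally show ?thesis .
qed (use assms in simp)

lemma sum_min_one_div_powers_le:
  fixes N :: real and p :: nat
  assumes "2 \<le> p" "0 \<le> N"
  shows "(\<Sum>j=2..K. min 1 (N / real p ^ j))
    \<le> min 1 (N / real p ^ 2) + 4 * sqrt N * (1 / (real p * sqrt (real p)))"
proof -
  define r where "r = 1 / sqrt (real p)"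
  have "0 < r" unfolding r_def using assms by simp
  have "4/3 < sqrt (2::real)" by (rule real_less_rsqrt) (simp add: power2_eq_square)
  moreover have "sqrt 2 \<le> sqrt (real p)" using assms by simp
  ultimately have "4/3 < sqrt (real p)" by linarith
  then have "r \<le> 1 / (4/3)" unfolding r_def using assms by (intro divide_left_mono) auto
  then have "r \<le> 3/4" by simp
  have "(\<Sum>j=3..K. r ^ j) \<le> r ^ 3 / (1 - r)"
    using \<open>0 < r\<close> \<open>r \<le> 3/4\<close> by (intro sum_power_atLeastAtMost_le) auto
  also have "\<dots> \<le> r ^ 3 / (1/4)"
    using \<open>0 < r\<close> \<open>r \<le> 3/4\<close> by (intro divide_left_mono) auto
  finally have geometric: "(\<Sum>j=3..K. r ^ j) \<le> 4 * r ^ 3" by simp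
  have "(\<Sum>j=3..K. min 1 (N / real p ^ j)) \<le> (\<Sum>j=3..K. sqrt N * r ^ j)"
  proof (intro sum_mono)
    fix j
    have "min 1 (N / real p ^ j) \<le> sqrt (N / real p ^ j)" using assms by (intro min_one_le_sqrt) simp
    also have "\<dots> = sqrt N * r ^ j" unfolding r_def
      by (simp add: real_sqrt_divide real_sqrt_power power_divide)
    finally show "min 1 (N / real p ^ j) \<le> sqrt N * r ^ j" .
  qed
  also have "\<dots> = sqrt N * (\<Sum>j=3..K. r ^ j)" by (simp add: sum_distrib_left)
  also have "\<dots> \<le> sqrt N * (4 * r ^ 3)" using geometric assms by (intro mult_left_mono) auto
  finally have tail: "(\<Sum>j=3..K. min 1 (N / real p ^ j)) \<le> 4 * sqrt N * r ^ 3" by simp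
  have "r ^ 3 = 1 / (real p * sqrt (real p))"
    unfolding r_def using assms by (simp add: power3_eq_cube power_divide)
  show ?thesis
  proof (cases "K < 2")
    case True
    then show ?thesis using assms by simp
  next
    case False
    then have "{2..K} = insert 2 {3..K}" by auto
    then show ?thesis using tail \<open>r ^ 3 = 1 / (real p * sqrt (real p))\<close> by simp
  qed
qed

lemma sum_ln_primes_min_one_div_powers_le:
  fixes N :: real
  assumes "0 \<le> N"
  shows "(\<Sum>p\<in>{p. prime p \<and> p \<le> n}. ln (real p) * (\<Sum>j=2..K. min 1 (N / real p ^ j)))
         \<le> 14 * ln 4 * sqrt N + ln 4"
proof -
  define g1 where "g1 d = min 1 (N / real d ^ 2)" for d :: nat
  define g2 where "g2 d = 1 / (real d * sqrt (real d))" for d :: nat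
  have "(\<Sum>p\<in>{p. prime p \<and> p \<le> n}. ln (real p) * (\<Sum>j=2..K. min 1 (N / real p ^ j)))
        \<le> (\<Sum>p\<in>{p. prime p \<and> p \<le> n}. ln (real p) * g1 p + 4 * sqrt N * (ln (real p) * g2 p))"
  proof (intro sum_mono)
    fix p assume "p \<in> {p. prime p \<and> p \<le> n}"
    then have "2 \<le> p" by (simp add: prime_ge_2_nat)
    then have "ln (real p) * (\<Sum>j=2..K. min 1 (N / real p ^ j)) \<le> ln (real p) * (g1 p + 4 * sqrt N * g2 p)"
      using sum_min_one_div_powers_le[OF _ assms, of p K] unfolding g1_def g2_def
      by (intro mult_left_mono) auto
    then show "ln (real p) * (\<Sum>j=2..K. min 1 (N / real p ^ j))
        \<le> ln (real p) * g1 p + 4 * sqrt N * (ln (real p) * g2 p)"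
      by (simp add: algebra_simps)
  qed
  also have "\<dots> = (\<Sum>p\<in>{p. prime p \<and> p \<le> n}. ln (real p) * g1 p)
      + 4 * sqrt N * (\<Sum>p\<in>{p. prime p \<and> p \<le> n}. ln (real p) * g2 p)"
    by (simp add: sum.distrib sum_distrib_left)
  also have "\<dots> \<le> ln 4 * (\<Sum>d=1..n. g1 d) + 4 * sqrt N * (ln 4 * (\<Sum>d=1..n. g2 d))"
  proof (intro add_mono mult_left_mono sum_ln_primes_mult_antimono_le)
    show "0 \<le> g1 d" "0 \<le> g2 d" for d unfolding g1_def g2_def using assms by simp_all
    show "g1 e \<le> g1 d" if "1 \<le> d" "d \<le> e" for d e
    proof -
      have "real d ^ 2 \<le> real e ^ 2" using that by (intro power_mono) auto
      then have "N / real e ^ 2 \<le> N / real d ^ 2" using that assms by (intro divide_left_mono) auto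
      then show ?thesis unfolding g1_def by linarith
    qed
    show "g2 e \<le> g2 d" if "1 \<le> d" "d \<le> e" for d e
    proof -
      have "real d * sqrt (real d) \<le> real e * sqrt (real e)" using that by (intro mult_mono) auto
      then show ?thesis unfolding g2_def using that by (intro divide_left_mono) auto
    qed
  qed (use assms in auto)
  also have "\<dots> \<le> ln 4 * (2 * sqrt N + 1) + 4 * sqrt N * (ln 4 * 3)"
    using sum_min_one_div_square_le[OF assms, of n] sum_inverse_three_halves_le[of n] assms
    unfolding g1_def g2_def by (intro add_mono mult_left_mono) auto
  finally show ?thesis by (simp add: algebra_simps)
qed

subsection \<open>The lcm of a set of bounded numbers\<close>

definition prime_power_excess :: "nat \<Rightarrow> nat set \<Rightarrow> real" where
  "prime_power_excess n A =
    (\<Sum>p\<in>{p. prime p \<and> p \<le> n}. ln (real p) * real (card {j\<in>{2..n}. \<exists>a\<in>A. p ^ j dvd a}))"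

lemma prime_power_excess_nonneg: "0 \<le> prime_power_excess n A"
  unfolding prime_power_excess_def
  by (intro sum_nonneg mult_nonneg_nonneg) (auto dest!: prime_ge_1_nat)

lemma prime_power_excess_mono: "A \<subseteq> B \<Longrightarrow> prime_power_excess n A \<le> prime_power_excess n B"
  unfolding prime_power_excess_def
  by (intro sum_mono mult_left_mono) (auto intro!: card_mono dest!: prime_ge_1_nat)

lemma ln_Lcm_le_sum_max_multiplicity:
  assumes "A \<subseteq> {1..n}"
  shows "ln (real (Lcm A))
    \<le> (\<Sum>p\<in>{p. prime p \<and> p \<le> n}. real (Max (insert 0 (multiplicity p ` A))) * ln (real p))"
proof -
  define P where "P = {p::nat. prime p \<and> p \<le> n}"
  define e where "e p = Max (insert 0 (multiplicity p ` A))" for p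
  define X where "X = (\<Prod>p\<in>P. p ^ e p)"
  have "finite A" using assms finite_subset by blast
  have "0 < X" unfolding X_def P_def by (intro prod_pos) (auto dest!: prime_gt_0_nat)
  have "a dvd X" if "a \<in> A" for a
  proof (rule multiplicity_le_imp_dvd)
    show "a \<noteq> 0" using assms that by auto
    fix q :: nat assume "prime q"
    show "multiplicity q a \<le> multiplicity q X"
    proof (cases "q \<in> P")
      case True
      have "multiplicity q X = e q"
        unfolding X_def using True \<open>prime q\<close>
        by (subst multiplicity_prod_prime_powers) (auto simp: P_def)
      then show ?thesis unfolding e_def using \<open>finite A\<close> that by simp
    next
      case False
      then have "n < q" using \<open>prime q\<close> unfolding P_def by auto
      moreover have "0 < a" "a \<le> n" using assms that by auto
      ultimately have "\<not> q dvd a" by (auto dest: dvd_imp_le)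
      then show ?thesis by (simp add: not_dvd_imp_multiplicity_0)
    qed
  qed
  then have "Lcm A dvd X" by (rule Lcm_least)
  then have "0 < Lcm A" "Lcm A \<le> X" using \<open>0 < X\<close> by (auto intro: dvd_imp_le dvd_pos_nat)
  then have "ln (real (Lcm A)) \<le> ln (real X)" by simp
  also have "\<dots> = (\<Sum>p\<in>P. real (e p) * ln (real p))"
    unfolding X_def
    by (subst of_nat_prod, subst ln_prod) (auto simp: P_def ln_realpow dest!: prime_gt_0_nat)
  finally show ?thesis unfolding P_def e_def .
qed

lemma max_multiplicity_minus_one_le_card:
  assumes "A \<subseteq> {1..n}" "prime p"
  shows "Max (insert 0 (multiplicity p ` A)) - 1 \<le> card {j\<in>{2..n}. \<exists>a\<in>A. p ^ j dvd a}"
proof -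
  define e where "e = Max (insert 0 (multiplicity p ` A))"
  have "finite A" using assms finite_subset by blast
  show ?thesis
  proof (cases "e = 0")
    case False
    then obtain a where "a \<in> A" "e = multiplicity p a"
      using Max_in[of "insert 0 (multiplicity p ` A)"] \<open>finite A\<close> unfolding e_def by auto
    then have "p ^ e dvd a" by (simp add: multiplicity_dvd)
    moreover have "0 < a" "a \<le> n" using \<open>a \<in> A\<close> assms(1) by auto
    ultimately have "p ^ e \<le> n" by (meson dvd_imp_le le_trans)
    moreover have "e < 2 ^ e" by (rule less_exp)
    moreover have "2 ^ e \<le> p ^ e" using prime_ge_2_nat[OF assms(2)] by (simp add: power_mono)
    ultimately have "e \<le> n" by linarith
    have "p ^ j dvd a" if "j \<le> e" for j
      using \<open>p ^ e dvd a\<close> le_imp_power_dvd[OF that] dvd_trans by blast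
    then have "{2..e} \<subseteq> {j\<in>{2..n}. \<exists>a\<in>A. p ^ j dvd a}"
      using \<open>e \<le> n\<close> \<open>a \<in> A\<close> by (auto intro!: bexI[where x=a])
    then have "card {2..e} \<le> card {j\<in>{2..n}. \<exists>a\<in>A. p ^ j dvd a}" by (intro card_mono) auto
    then show ?thesis unfolding e_def by simp
  qed (simp add: e_def)
qed

lemma lcmY_minus_primeZ_le:
  assumes "\<And>k. k \<in> {1..N} \<Longrightarrow> V k \<omega> \<in> {1..n}"
  shows "lcmY V N \<omega> - primeZ n V N \<omega> \<le> prime_power_excess n ((\<lambda>k. V k \<omega>) ` {1..N})"
proof -
  define P where "P = {p::nat. prime p \<and> p \<le> n}"
  define A where "A = (\<lambda>k. V k \<omega>) ` {1..N}"
  define e where "e p = Max (insert 0 (multiplicity p ` A))" for p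
  have "A \<subseteq> {1..n}" unfolding A_def using assms by auto
  have "lcmY V N \<omega> - primeZ n V N \<omega>
      \<le> (\<Sum>p\<in>P. real (e p) * ln (real p)) - (\<Sum>p\<in>P. ln (real p) * (if 1 \<le> e p then 1 else 0))"
    using ln_Lcm_le_sum_max_multiplicity[OF \<open>A \<subseteq> {1..n}\<close>]
    unfolding lcmY_def primeZ_def P_def A_def e_def by (simp add: image_image)
  also have "\<dots> = (\<Sum>p\<in>P. ln (real p) * real (e p - 1))"
    unfolding sum_subtractf[symmetric] by (intro sum.cong refl) (simp add: algebra_simps)
  also have "\<dots> \<le> prime_power_excess n A"
    unfolding prime_power_excess_def P_def e_def
    using max_multiplicity_minus_one_le_card[OF \<open>A \<subseteq> {1..n}\<close>]
    by (intro sum_mono mult_left_mono) (auto dest!: prime_ge_1_nat)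
  finally show ?thesis unfolding A_def .
qed

lemma prime_power_excess_image_eq:
  "prime_power_excess n ((\<lambda>k. V k \<omega>) ` {1..N})
    = (\<Sum>p\<in>{p. prime p \<and> p \<le> n}. \<Sum>j=2..n. ln (real p) * of_bool (\<exists>k\<in>{1..N}. p ^ j dvd V k \<omega>))"
  unfolding prime_power_excess_def by (simp add: Int_def flip: sum_distrib_left)

lemma sup_lcmY_minus_primeZ_bounds:
  fixes c T :: real
  assumes "\<And>k. k \<in> {1..nat \<lfloor>c * T\<rfloor>} \<Longrightarrow> V k \<omega> \<in> {1..n}" "0 \<le> c" "0 \<le> T"
  defines "D t \<equiv> lcmY V (nat \<lfloor>c * t\<rfloor>) \<omega> - primeZ n V (nat \<lfloor>c * t\<rfloor>) \<omega>"
  shows "0 \<le> (SUP t\<in>{0..T}. D t)"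
    and "(SUP t\<in>{0..T}. D t) \<le> prime_power_excess n ((\<lambda>k. V k \<omega>) ` {1..nat \<lfloor>c * T\<rfloor>})"
proof -
  have D_le: "D t \<le> prime_power_excess n ((\<lambda>k. V k \<omega>) ` {1..nat \<lfloor>c * T\<rfloor>})" if "t \<in> {0..T}" for t
  proof -
    have "nat \<lfloor>c * t\<rfloor> \<le> nat \<lfloor>c * T\<rfloor>"
      using that assms(2) by (intro nat_mono floor_mono mult_left_mono) auto
    then have "D t \<le> prime_power_excess n ((\<lambda>k. V k \<omega>) ` {1..nat \<lfloor>c * t\<rfloor>})"
      unfolding D_def using assms(1) by (intro lcmY_minus_primeZ_le) auto
    also have "\<dots> \<le> prime_power_excess n ((\<lambda>k. V k \<omega>) ` {1..nat \<lfloor>c * T\<rfloor>})"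
      using \<open>nat \<lfloor>c * t\<rfloor> \<le> nat \<lfloor>c * T\<rfloor>\<close> by (intro prime_power_excess_mono image_mono) auto
    finally show ?thesis .
  qed
  then have "bdd_above (D ` {0..T})" by (intro bdd_aboveI2) auto
  then have "D 0 \<le> (SUP t\<in>{0..T}. D t)" using assms(3) by (intro cSUP_upper) auto
  moreover have "D 0 = 0" unfolding D_def lcmY_def primeZ_def by simp
  ultimately show "0 \<le> (SUP t\<in>{0..T}. D t)" by simp
  show "(SUP t\<in>{0..T}. D t) \<le> prime_power_excess n ((\<lambda>k. V k \<omega>) ` {1..nat \<lfloor>c * T\<rfloor>})"
    using assms(3) D_le by (intro cSUP_least) auto
qed

subsection \<open>Expectations\<close>

lemma card_multiples_le:
  assumes "0 < q"
  shows "card {x\<in>{1..n::nat}. q dvd x} \<le> n div q"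
proof -
  have "{x\<in>{1..n::nat}. q dvd x} \<subseteq> (\<lambda>i. q * i) ` {1..n div q}"
  proof
    fix x assume x: "x \<in> {x\<in>{1..n::nat}. q dvd x}"
    then obtain i where i: "x = q * i" by auto
    then have "1 \<le> i" using x by (cases i) auto
    moreover have "i \<le> n div q"
      using div_le_mono[of x n q] x i \<open>0 < q\<close> by simp
    ultimately show "x \<in> (\<lambda>i. q * i) ` {1..n div q}" using i by auto
  qed
  then have "card {x\<in>{1..n::nat}. q dvd x} \<le> card ((\<lambda>i. q * i) ` {1..n div q})"
    by (intro card_mono) auto
  also have "\<dots> \<le> n div q" using card_image_le[of "{1..n div q}" "\<lambda>i. q * i"] by simp
  finally show ?thesis .
qed

context prob_space
begin

lemma AE_uniform_in_range:
  fixes V :: "'a \<Rightarrow> nat"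
  assumes "1 \<le> n"
    and "V \<in> measurable M (count_space UNIV)"
    and "distr M (count_space UNIV) V = measure_pmf (pmf_of_set {1..n})"
  shows "AE \<omega> in M. V \<omega> \<in> {1..n}"
proof -
  have "AE x in distr M (count_space UNIV) V. x \<in> {1..n}"
    unfolding assms(3) using assms(1) by (simp add: AE_measure_pmf_iff)
  then show ?thesis using AE_distr_iff[OF assms(2)] by simp
qed

lemma prob_dvd_uniform_le:
  assumes "1 \<le> n" "0 < q"
    and "V \<in> measurable M (count_space UNIV)"
    and "distr M (count_space UNIV) V = measure_pmf (pmf_of_set {1..n})"
  shows "prob {\<omega>\<in>space M. q dvd V \<omega>} \<le> 1 / real q"
proof -
  have "{\<omega>\<in>space M. q dvd V \<omega>} = V -` {x. q dvd x} \<inter> space M" by auto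
  then have "prob {\<omega>\<in>space M. q dvd V \<omega>} = measure (distr M (count_space UNIV) V) {x. q dvd x}"
    using assms(3) by (simp add: measure_distr)
  also have "\<dots> = real (card {x\<in>{1..n}. q dvd x}) / real n"
    unfolding assms(4) using assms(1) by (subst measure_pmf_of_set) (auto simp: Int_def)
  also have "\<dots> \<le> real (n div q) / real n"
    using card_multiples_le[OF assms(2), of n] by (intro divide_right_mono) auto
  also have "\<dots> \<le> 1 / real q"
    using div_times_less_eq_dividend[of n q] assms(1,2)
    by (simp add: field_simps flip: of_nat_mult)
  finally show ?thesis .
qed

lemma prob_some_dvd_le:
  assumes "1 \<le> n" "0 < q"
    and "\<And>k. 1 \<le> k \<Longrightarrow> V k \<in> measurable M (count_space UNIV)"
    and "\<And>k. 1 \<le> k \<Longrightarrow> distr M (count_space UNIV) (V k) = measure_pmf (pmf_of_set {1..n})"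
  shows "prob {\<omega>\<in>space M. \<exists>k\<in>{1..N}. q dvd V k \<omega>} \<le> min 1 (real N / real q)"
proof -
  have events: "{\<omega>\<in>space M. q dvd V k \<omega>} \<in> events" if "1 \<le> k" for k
    using assms(3)[OF that] by measurable
  have "{\<omega>\<in>space M. \<exists>k\<in>{1..N}. q dvd V k \<omega>} = (\<Union>k\<in>{1..N}. {\<omega>\<in>space M. q dvd V k \<omega>})"
    by auto
  then have "prob {\<omega>\<in>space M. \<exists>k\<in>{1..N}. q dvd V k \<omega>} \<le> (\<Sum>k\<in>{1..N}. prob {\<omega>\<in>space M. q dvd V k \<omega>})"
    using events by (auto intro: finite_measure_subadditive_finite)
  also have "\<dots> \<le> (\<Sum>k\<in>{1..N}. 1 / real q)"
    using assms by (intro sum_mono prob_dvd_uniform_le) auto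
  finally show ?thesis by simp
qed

lemma expectation_prime_power_excess_le:
  assumes "1 \<le> n"
    and "\<And>k. 1 \<le> k \<Longrightarrow> V k \<in> measurable M (count_space UNIV)"
    and "\<And>k. 1 \<le> k \<Longrightarrow> distr M (count_space UNIV) (V k) = measure_pmf (pmf_of_set {1..n})"
  shows "integrable M (\<lambda>\<omega>. prime_power_excess n ((\<lambda>k. V k \<omega>) ` {1..N}))"
    and "expectation (\<lambda>\<omega>. prime_power_excess n ((\<lambda>k. V k \<omega>) ` {1..N}))
      \<le> 14 * ln 4 * sqrt (real N) + ln 4"
proof -
  define P where "P = {p::nat. prime p \<and> p \<le> n}"
  define E where "E p j = {\<omega>\<in>space M. \<exists>k\<in>{1..N}. (p::nat) ^ j dvd V k \<omega>}" for p j :: nat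
  have E_events: "E p j \<in> events" for p j
    unfolding E_def using assms(2) by measurable
  define G where "G \<omega> = (\<Sum>p\<in>P. \<Sum>j=2..n. ln (real p) * indicator (E p j) \<omega>)" for \<omega>
  have excess_eq: "prime_power_excess n ((\<lambda>k. V k \<omega>) ` {1..N}) = G \<omega>" if "\<omega> \<in> space M" for \<omega>
    unfolding prime_power_excess_image_eq G_def P_def using that
    by (intro sum.cong refl) (simp add: E_def indicator_def)
  have "integrable M G"
    unfolding G_def
    by (intro Bochner_Integration.integrable_sum Bochner_Integration.integrable_mult_right)
      (use E_events in \<open>auto simp: emeasure_eq_measure\<close>)
  then show "integrable M (\<lambda>\<omega>. prime_power_excess n ((\<lambda>k. V k \<omega>) ` {1..N}))"
    using excess_eq by (subst Bochner_Integration.integrable_cong[OF refl excess_eq]) auto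
  have "expectation (\<lambda>\<omega>. prime_power_excess n ((\<lambda>k. V k \<omega>) ` {1..N})) = expectation G"
    using excess_eq by (rule Bochner_Integration.integral_cong[OF refl])
  also have "\<dots> = (\<Sum>p\<in>P. \<Sum>j=2..n. ln (real p) * prob (E p j))"
    unfolding G_def using E_events
    by (subst Bochner_Integration.integral_sum, fastforce simp: emeasure_eq_measure)
      (subst Bochner_Integration.integral_sum, auto intro!: sum.cong simp: emeasure_eq_measure)
  also have "\<dots> \<le> (\<Sum>p\<in>P. ln (real p) * (\<Sum>j=2..n. min 1 (real N / real p ^ j)))"
  proof (unfold sum_distrib_left, intro sum_mono mult_left_mono)
    fix p j assume "p \<in> P"
    then show "0 \<le> ln (real p)" by (auto simp: P_def dest!: prime_ge_1_nat)
    have "0 < p ^ j" using \<open>p \<in> P\<close> by (simp add: P_def prime_gt_0_nat)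
    then show "prob (E p j) \<le> min 1 (real N / real p ^ j)"
      using prob_some_dvd_le[OF assms(1) _ assms(2,3), where q = "p ^ j" and N = N] by (simp add: E_def)
  qed
  also have "\<dots> \<le> 14 * ln 4 * sqrt (real N) + ln 4"
    unfolding P_def by (rule sum_ln_primes_min_one_div_powers_le) simp
  finally show "expectation (\<lambda>\<omega>. prime_power_excess n ((\<lambda>k. V k \<omega>) ` {1..N}))
      \<le> 14 * ln 4 * sqrt (real N) + ln 4" .
qed

lemma expectation_sup_lcmY_minus_primeZ_le:
  fixes c T :: real
  assumes "1 \<le> n"
    and "\<And>k. 1 \<le> k \<Longrightarrow> V k \<in> measurable M (count_space UNIV)"
    and "\<And>k. 1 \<le> k \<Longrightarrow> distr M (count_space UNIV) (V k) = measure_pmf (pmf_of_set {1..n})"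
    and "0 \<le> c" "0 \<le> T"
  shows "\<bar>expectation (\<lambda>\<omega>. SUP t\<in>{0..T}. lcmY V (nat \<lfloor>c * t\<rfloor>) \<omega> - primeZ n V (nat \<lfloor>c * t\<rfloor>) \<omega>)\<bar>
    \<le> 14 * ln 4 * sqrt (c * T) + ln 4"
proof -
  define N where "N = nat \<lfloor>c * T\<rfloor>"
  define S where "S \<omega> = (SUP t\<in>{0..T}. lcmY V (nat \<lfloor>c * t\<rfloor>) \<omega> - primeZ n V (nat \<lfloor>c * t\<rfloor>) \<omega>)" for \<omega>
  define F where "F \<omega> = prime_power_excess n ((\<lambda>k. V k \<omega>) ` {1..N})" for \<omega>
  have "AE \<omega> in M. \<forall>k\<in>{1..N}. V k \<omega> \<in> {1..n}"
    using AE_uniform_in_range[OF assms(1,2,3)] by (subst AE_finite_all) auto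
  then have bounds: "AE \<omega> in M. 0 \<le> S \<omega> \<and> S \<omega> \<le> F \<omega>"
  proof (rule AE_mp, intro AE_I2 impI)
    fix \<omega> assume "\<forall>k\<in>{1..N}. V k \<omega> \<in> {1..n}"
    then have "\<And>k. k \<in> {1..nat \<lfloor>c * T\<rfloor>} \<Longrightarrow> V k \<omega> \<in> {1..n}" unfolding N_def by blast
    from sup_lcmY_minus_primeZ_bounds[where V = V and \<omega> = \<omega>, OF this assms(4,5)]
    show "0 \<le> S \<omega> \<and> S \<omega> \<le> F \<omega>" unfolding S_def F_def N_def by blast
  qed
  have "0 \<le> expectation S"
    using bounds by (intro integral_nonneg_AE) auto
  moreover have "expectation S \<le> expectation F"
    using bounds expectation_prime_power_excess_le(1)[OF assms(1-3)] prime_power_excess_nonneg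
    unfolding F_def by (intro integral_mono_AE') auto
  moreover have "expectation F \<le> 14 * ln 4 * sqrt (real N) + ln 4"
    unfolding F_def by (rule expectation_prime_power_excess_le(2)[OF assms(1-3)])
  moreover have "14 * ln 4 * sqrt (real N) \<le> 14 * ln 4 * sqrt (c * T)"
    unfolding N_def using assms(4,5) of_int_floor_le[of "c * T"] by simp
  ultimately show ?thesis unfolding S_def by (subst abs_of_nonneg) linarith+
qed

end

theorem lemma6p1:
  fixes M :: "'a measure" and U :: "nat \<Rightarrow> nat \<Rightarrow> 'a \<Rightarrow> nat"
    and m :: "nat \<Rightarrow> real" and T :: real
  assumes "prob_space M"
    and "\<And>n. n \<ge> 1 \<Longrightarrow> prob_space.indep_vars M (\<lambda>_. count_space UNIV) (U n) {1..}"
    and "\<And>n k. n \<ge> 1 \<Longrightarrow> k \<ge> 1 \<Longrightarrow>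
           distr M (count_space UNIV) (U n k) = measure_pmf (pmf_of_set {1..n})"
    and "filterlim m at_top sequentially"
    and "m \<in> o(\<lambda>n. real n)"
    and "T > 0"
  shows "(\<lambda>n. prob_space.expectation M (\<lambda>\<omega>.
            SUP t\<in>{0..T}. lcmY (U n) (nat \<lfloor>m n * t\<rfloor>) \<omega> - primeZ n (U n) (nat \<lfloor>m n * t\<rfloor>) \<omega>))
         \<in> O(\<lambda>n. sqrt (m n))"
proof -
  interpret prob_space M by (rule assms(1))
  have "eventually (\<lambda>n. 1 \<le> m n \<and> 1 \<le> n) sequentially"
    using assms(4) unfolding filterlim_at_top by (intro eventually_conj) auto
  then show ?thesis
  proof (rule bigoI[where c = "14 * ln 4 * sqrt T + ln 4", OF eventually_mono])
    fix n assume n: "1 \<le> m n \<and> 1 \<le> n"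
    have measurable: "U n k \<in> measurable M (count_space UNIV)" if "1 \<le> k" for k
      using assms(2)[of n] n that unfolding indep_vars_def by auto
    have "\<bar>expectation (\<lambda>\<omega>. SUP t\<in>{0..T}.
          lcmY (U n) (nat \<lfloor>m n * t\<rfloor>) \<omega> - primeZ n (U n) (nat \<lfloor>m n * t\<rfloor>) \<omega>)\<bar>
        \<le> 14 * ln 4 * sqrt (m n * T) + ln 4"
      using n assms(6) by (intro expectation_sup_lcmY_minus_primeZ_le measurable assms(3)) auto
    also have "\<dots> = 14 * ln 4 * sqrt T * sqrt (m n) + ln 4"
      by (simp add: real_sqrt_mult)
    also have "\<dots> \<le> (14 * ln 4 * sqrt T + ln 4) * sqrt (m n)"
      using n by (simp add: distrib_right)
    finally show "norm (expectation (\<lambda>\<omega>. SUP t\<in>{0..T}.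
          lcmY (U n) (nat \<lfloor>m n * t\<rfloor>) \<omega> - primeZ n (U n) (nat \<lfloor>m n * t\<rfloor>) \<omega>))
        \<le> (14 * ln 4 * sqrt T + ln 4) * norm (sqrt (m n))"
      using n by simp
  qed
qed

end
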